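(* Let $\mathcal L_{\mathcal N}=(\mathcal L,[\cdot_\lambda\cdot]_{\mathcal L},\mathcal N)$ and $\mathcal H_{\mathcal Q}=(\mathcal H,[\cdot_\lambda\cdot]_{\mathcal H},\mathcal Q)$ be Nijenhuis Lie conformal algebras, and let $\mathcal E_{\mathcal R}$ and $\mathcal E'_{\mathcal R'}$ be two equivalent non-abelian extensions of $\mathcal L_{\mathcal N}$ by $\mathcal H_{\mathcal Q}$, with sections $s$ of $\mathcal E_{\mathcal R}$ and $s'$ of $\mathcal E'_{\mathcal R'}$ respectively. Then the non-abelian $2$-cocycles $(\chi_\lambda,\rho,\Phi)$ and $(\chi'_\lambda,\rho',\Phi')$ induced by $s$ and $s'$ are equivalent.
   Context: All spaces are over $\mathbb C$. A Lie conformal algebra is a $\mathbb C[\partial]$-module with a $\mathbb C$-bilinear $\lambda$-bracket satisfying $[\partial a_\lambda b]=-\lambda[a_\lambda b]$, $[a_\lambda\partial b]=(\partial+\lambda)[a_\lambda b]$, $[a_\lambda b]=-[b_{-\partial-\lambda}a]$, $[a_\lambda[b_\mu c]]=[[a_\lambda b]_{\lambda+\mu}c]+[b_\mu[a_\lambda c]]$. A Nijenhuis operator is a $\mathbb C[\partial]$-linear $\mathcal N$ with $[\mathcal N(p)_\lambda\mathcal N(q)]=\mathcal N([\mathcal N(p)_\lambda q]+[p_\lambda\mathcal N(q)]-\mathcal N([p_\lambda q]))$; a Nijenhuis Lie conformal algebra is a Lie conformal algebra with a Nijenhuis operator; morphisms are bracket-preserving $\mathbb C[\partial]$-linear maps intertwining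 the operators. A non-abelian extension of $\mathcal L_{\mathcal N}$ by $\mathcal H_{\mathcal Q}$ is a Nijenhuis Lie conformal algebra $\mathcal E_{\mathcal R}=(\mathcal E,[\cdot_\lambda\cdot]_{\mathcal E},\mathcal R)$ with a short exact sequence $0\to\mathcal H_{\mathcal Q}\xrightarrow{inc}\mathcal E_{\mathcal R}\xrightarrow{proj}\mathcal L_{\mathcal N}\to0$ of morphisms of Nijenhuis Lie conformal algebras, split as $\mathbb C[\partial]$-modules; identify $\mathcal H$ with $inc(\mathcal H)$, so $\mathcal R|_{\mathcal H}=\mathcal Q$. Two extensions $\mathcal E_{\mathcal R},\mathcal E'_{\mathcal R'}$ are equivalent if there is a morphism of Nijenhuis Lie conformal algebras $\tau:\mathcal E_{\mathcal R}\to\mathcal E'_{\mathcal R'}$ with $\tau\circ inc=inc'$ and $proj'\circ\tau=proj$. A section is a $\mathbb C[\partial]$-linear $s$ with $proj\circ s=\mathrm{id}$; it induces $\chi_\lambda(p,q)=[s(p)_\lambda s(q)]_{\mathcal E}-s([p_\lambda q]_{\mathcal L})$, $\rho(p)_\lambda h=[s(p)_\lambda h]_{\mathcal E}$, $\Phi(p)=\mathcal R(s(p))-s(\mathcal N(p))$, all $\mathcal H$-valued. A non-abelian $2$-cocycle of $\mathcal L_{\mathcal N}$ with values in $\mathcal H_{\mathcal Q}$ is a triple of maps $\chi_\lambda:\mathcal L\otimes\mathcal L\to\mathcal H[\lambda]$, $\rho:\mathcal L\otimes\mathcal H\to\mathcal H[\lambda]$, $\Phi:\mathcal L\to\mathcal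 H$ satisfying, for all $p,q,r\in\mathcal L$, $h\in\mathcal H$: (i) $\rho(p)_\lambda\rho(q)_\mu h-\rho(q)_\mu\rho(p)_\lambda h-\rho([p_\lambda q]_{\mathcal L})_{\lambda+\mu}h=[\chi_\lambda(p,q)_{\lambda+\mu}h]_{\mathcal H}$; (ii) $\rho(p)_\lambda\chi_\mu(q,r)+\rho(q)_\mu\chi_\lambda(r,p)+\rho(r)_{-\partial-\lambda-\mu}\chi_\lambda(p,q)-\chi_{\lambda+\mu}([q_\mu r]_{\mathcal L},p)-\chi_{\lambda+\mu}([r_{-\partial-\lambda}p]_{\mathcal L},q)-\chi_{\lambda+\mu}([p_\lambda q]_{\mathcal L},r)=0$; (iii) $\rho(\mathcal N p)_\lambda\mathcal Q(h)=\mathcal Q(\rho(\mathcal N p)_\lambda h+\rho(p)_\lambda\mathcal Q(h)-\mathcal Q(\rho(p)_\lambda h))+\mathcal Q([\Phi(p)_\lambda h]_{\mathcal H})-[\Phi(p)_\lambda\mathcal Q(h)]_{\mathcal H}$; (iv) $\chi_\lambda(\mathcal Np,\mathcal Nq)-\mathcal Q(\chi_\lambda(\mathcal Np,q)+\chi_\lambda(p,\mathcal Nq)-\mathcal Q\chi_\lambda(p,q))-\Phi([\mathcal N(p)_\lambda q]_{\mathcal L}+[p_\lambda\mathcal N(q)]_{\mathcal L}-\mathcal N[p_\lambda q]_{\mathcal L})+\rho(\mathcal Np)_\lambda\Phi(q)-\rho(\mathcal Nq)_{-\partial-\lambda}\Phi(p)+\mathcal Q(\rho(q)_{-\partial-\lambda}\Phi(p)-\rho(p)_\lambda\Phi(q)+\Phi([p_\lambda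 q]_{\mathcal L}))+[\Phi(p)_\lambda\Phi(q)]_{\mathcal H}=0$. Two non-abelian $2$-cocycles $(\chi_\lambda,\rho,\Phi)$, $(\chi'_\lambda,\rho',\Phi')$ are equivalent if there is a linear map $\tau:\mathcal L\to\mathcal H$ with $\rho(p)_\lambda h-\rho'(p)_\lambda h=[\tau(p)_\lambda h]_{\mathcal H}$, $\chi_\lambda(p,q)-\chi'_\lambda(p,q)=[\tau(p)_\lambda\tau(q)]_{\mathcal H}-\tau([p_\lambda q]_{\mathcal L})+\rho'(p)_\lambda\tau(q)-\rho'(q)_{-\partial-\lambda}\tau(p)$, and $\Phi(p)-\Phi'(p)=\mathcal Q(\tau(p))-\tau(\mathcal N(p))$ for all $p,q\in\mathcal L$, $h\in\mathcal H$. *)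

theory Defs
  imports Complex_Main "HOL-Computational_Algebra.Polynomial"
begin

class cvector = ab_group_add +
  fixes scaleC :: "complex \<Rightarrow> 'a \<Rightarrow> 'a" (infixr \<open>*\<^sub>C\<close> 75)
  assumes scaleC_add_right: "a *\<^sub>C (x + y) = a *\<^sub>C x + a *\<^sub>C y"
    and scaleC_add_left: "(a + b) *\<^sub>C x = a *\<^sub>C x + b *\<^sub>C x"
    and scaleC_scaleC: "a *\<^sub>C (b *\<^sub>C x) = (a * b) *\<^sub>C x"
    and scaleC_one: "1 *\<^sub>C x = x"

definition clin :: "('a::cvector \<Rightarrow> 'b::cvector) \<Rightarrow> bool" where
  "clin f \<longleftrightarrow> (\<forall>x y. f (x + y) = f x + f y) \<and> (\<forall>c x. f (c *\<^sub>C x) = c *\<^sub>C f x)"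

text \<open>An element of M[\<lambda>] is a polynomial \<open>'a poly\<close>; \<open>coeff p j\<close> is the coefficient of \<lambda>^j.
  Multiplication by \<lambda> is \<open>pCons 0\<close>; applying a (linear) map coefficientwise is \<open>map_poly\<close>.\<close>

text \<open>Substitution \<lambda> := -\<partial>-\<lambda>:  \<open>\<Sum>\<^sub>j \<lambda>^j c_j \<mapsto> \<Sum>\<^sub>j (-\<partial>-\<lambda>)^j c_j\<close>.\<close>
definition subst_neg :: "('a::real_vector \<Rightarrow> 'a) \<Rightarrow> 'a poly \<Rightarrow> 'a poly" where
  "subst_neg D p = (\<Sum>j\<le>degree p. \<Sum>k\<le>j.
      monom (((-1) ^ j * real (j choose k)) *\<^sub>R (D ^^ (j - k)) (coeff p j)) k)"

text \<open>A structure (\<partial>, [\<cdot>_\<lambda>\<cdot>], operator); \<open>brk A a b\<close> = [a_\<lambda> b] \<in> A[\<lambda>].\<close>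
type_synonym 'a nlca_str = "('a \<Rightarrow> 'a) \<times> ('a \<Rightarrow> 'a \<Rightarrow> 'a poly) \<times> ('a \<Rightarrow> 'a)"

definition der :: "'a nlca_str \<Rightarrow> 'a \<Rightarrow> 'a" where "der A = fst A"
definition brk :: "('a::zero) nlca_str \<Rightarrow> 'a \<Rightarrow> 'a \<Rightarrow> 'a poly" where "brk A = fst (snd A)"
definition nop :: "'a nlca_str \<Rightarrow> 'a \<Rightarrow> 'a" where "nop A = snd (snd A)"

text \<open>Jacobi identity, coefficient of \<lambda>^i \<mu>^j:
  [a_\<lambda>[b_\<mu> c]] = [[a_\<lambda> b]_{\<lambda>+\<mu>} c] + [b_\<mu>[a_\<lambda> c]].\<close>
definition jac_lhs :: "('a::real_vector \<Rightarrow> 'a \<Rightarrow> 'a poly) \<Rightarrow> 'a \<Rightarrow> 'a \<Rightarrow> 'a \<Rightarrow> nat \<Rightarrow> nat \<Rightarrow> 'a" where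
  "jac_lhs br a b c i j = coeff (br a (coeff (br b c) j)) i"

definition jac_r1 :: "('a::real_vector \<Rightarrow> 'a \<Rightarrow> 'a poly) \<Rightarrow> 'a \<Rightarrow> 'a \<Rightarrow> 'a \<Rightarrow> nat \<Rightarrow> nat \<Rightarrow> 'a" where
  "jac_r1 br a b c i j = (\<Sum>m\<le>i. real ((i - m + j) choose j) *\<^sub>R
      coeff (br (coeff (br a b) m) c) (i - m + j))"

definition jac_r2 :: "('a::real_vector \<Rightarrow> 'a \<Rightarrow> 'a poly) \<Rightarrow> 'a \<Rightarrow> 'a \<Rightarrow> 'a \<Rightarrow> nat \<Rightarrow> nat \<Rightarrow> 'a" where
  "jac_r2 br a b c i j = coeff (br b (coeff (br a c) i)) j"

text \<open>We need both real (for integer coefficients) and complex scalars; a complex vector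
  space is a real vector space by restriction, which we require to be compatible.\<close>
class cvec = real_vector + cvector +
  assumes scaleR_scaleC: "r *\<^sub>R x = complex_of_real r *\<^sub>C x"

definition lie_conformal :: "('a::cvec) nlca_str \<Rightarrow> bool" where
  "lie_conformal A \<longleftrightarrow>
     clin (der A) \<and>
     (\<forall>a b c. brk A (a + b) c = brk A a c + brk A b c) \<and>
     (\<forall>a b c. brk A a (b + c) = brk A a b + brk A a c) \<and>
     (\<forall>z a b. brk A (z *\<^sub>C a) b = map_poly (scaleC z) (brk A a b)) \<and>
     (\<forall>z a b. brk A a (z *\<^sub>C b) = map_poly (scaleC z) (brk A a b)) \<and>
     (\<forall>a b. brk A (der A a) b = - pCons 0 (brk A a b)) \<and>
     (\<forall>a b. brk A a (der A b) = map_poly (der A) (brk A a b) + pCons 0 (brk A a b)) \<and>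
     (\<forall>a b. brk A a b = - subst_neg (der A) (brk A b a)) \<and>
     (\<forall>a b c i j. jac_lhs (brk A) a b c i j = jac_r1 (brk A) a b c i j + jac_r2 (brk A) a b c i j)"

definition nijenhuis :: "('a::cvec) nlca_str \<Rightarrow> bool" where
  "nijenhuis A \<longleftrightarrow> clin (nop A) \<and> (\<forall>x. nop A (der A x) = der A (nop A x)) \<and>
     (\<forall>p q. brk A (nop A p) (nop A q) =
        map_poly (nop A) (brk A (nop A p) q + brk A p (nop A q) - map_poly (nop A) (brk A p q)))"

definition nijenhuis_lca :: "('a::cvec) nlca_str \<Rightarrow> bool" where
  "nijenhuis_lca A \<longleftrightarrow> lie_conformal A \<and> nijenhuis A"

definition cd_linear :: "('a::cvec) nlca_str \<Rightarrow> ('a \<Rightarrow> 'b) \<Rightarrow> ('b::cvec) nlca_str \<Rightarrow> bool" where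
  "cd_linear A f B \<longleftrightarrow> clin f \<and> (\<forall>x. f (der A x) = der B (f x))"

definition nlca_morphism :: "('a::cvec) nlca_str \<Rightarrow> ('a \<Rightarrow> 'b) \<Rightarrow> ('b::cvec) nlca_str \<Rightarrow> bool" where
  "nlca_morphism A f B \<longleftrightarrow> cd_linear A f B \<and>
     (\<forall>a b. brk B (f a) (f b) = map_poly f (brk A a b)) \<and>
     (\<forall>a. f (nop A a) = nop B (f a))"

definition is_section :: "('l::cvec) nlca_str \<Rightarrow> ('e::cvec) nlca_str \<Rightarrow> ('e \<Rightarrow> 'l) \<Rightarrow> ('l \<Rightarrow> 'e) \<Rightarrow> bool" where
  "is_section L E proj s \<longleftrightarrow> cd_linear L s E \<and> (\<forall>p. proj (s p) = p)"

text \<open>Non-abelian extension \<open>0 \<rightarrow> H \<rightarrow> E \<rightarrow> L \<rightarrow> 0\<close>, split as C[\<partial>]-modules.\<close>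
definition nonabelian_extension ::
  "('l::cvec) nlca_str \<Rightarrow> ('h::cvec) nlca_str \<Rightarrow> ('e::cvec) nlca_str \<Rightarrow> ('h \<Rightarrow> 'e) \<Rightarrow> ('e \<Rightarrow> 'l) \<Rightarrow> bool" where
  "nonabelian_extension L H E inc proj \<longleftrightarrow>
     nijenhuis_lca L \<and> nijenhuis_lca H \<and> nijenhuis_lca E \<and>
     nlca_morphism H inc E \<and> nlca_morphism E proj L \<and>
     inj inc \<and> surj proj \<and> range inc = {x. proj x = 0} \<and>
     (\<exists>s. is_section L E proj s)"

definition equivalent_extensions ::
  "('h::cvec) nlca_str \<Rightarrow> ('e::cvec) nlca_str \<Rightarrow> ('h \<Rightarrow> 'e) \<Rightarrow> ('e \<Rightarrow> 'l::cvec) \<Rightarrow>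
   ('e'::cvec) nlca_str \<Rightarrow> ('h \<Rightarrow> 'e') \<Rightarrow> ('e' \<Rightarrow> 'l) \<Rightarrow> bool" where
  "equivalent_extensions H E inc proj E' inc' proj' \<longleftrightarrow>
     (\<exists>\<tau>. nlca_morphism E \<tau> E' \<and> (\<forall>h. \<tau> (inc h) = inc' h) \<and> (\<forall>x. proj' (\<tau> x) = proj x))"

text \<open>The triple (\<chi>, \<rho>, \<Phi>) induced by a section s; since H is identified with inc(H)
  (inc injective), the H-valued maps are characterized through inc.\<close>
definition induced_by_section ::
  "('l::cvec) nlca_str \<Rightarrow> ('e::cvec) nlca_str \<Rightarrow> ('h::cvec \<Rightarrow> 'e) \<Rightarrow> ('l \<Rightarrow> 'e) \<Rightarrow>
   ('l \<Rightarrow> 'l \<Rightarrow> 'h poly) \<Rightarrow> ('l \<Rightarrow> 'h \<Rightarrow> 'h poly) \<Rightarrow> ('l \<Rightarrow> 'h) \<Rightarrow> bool" where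
  "induced_by_section L E inc s \<chi> \<rho> \<Phi> \<longleftrightarrow>
     (\<forall>p q. map_poly inc (\<chi> p q) = brk E (s p) (s q) - map_poly s (brk L p q)) \<and>
     (\<forall>p h. map_poly inc (\<rho> p h) = brk E (s p) (inc h)) \<and>
     (\<forall>p. inc (\<Phi> p) = nop E (s p) - s (nop L p))"

definition equivalent_cocycles ::
  "('l::cvec) nlca_str \<Rightarrow> ('h::cvec) nlca_str \<Rightarrow>
   ('l \<Rightarrow> 'l \<Rightarrow> 'h poly) \<Rightarrow> ('l \<Rightarrow> 'h \<Rightarrow> 'h poly) \<Rightarrow> ('l \<Rightarrow> 'h) \<Rightarrow>
   ('l \<Rightarrow> 'l \<Rightarrow> 'h poly) \<Rightarrow> ('l \<Rightarrow> 'h \<Rightarrow> 'h poly) \<Rightarrow> ('l \<Rightarrow> 'h) \<Rightarrow> bool" where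
  "equivalent_cocycles L H \<chi> \<rho> \<Phi> \<chi>' \<rho>' \<Phi>' \<longleftrightarrow>
     (\<exists>\<tau>. clin \<tau> \<and>
        (\<forall>p h. \<rho> p h - \<rho>' p h = brk H (\<tau> p) h) \<and>
        (\<forall>p q. \<chi> p q - \<chi>' p q = brk H (\<tau> p) (\<tau> q) - map_poly \<tau> (brk L p q)
                 + \<rho>' p (\<tau> q) - subst_neg (der H) (\<rho>' q (\<tau> p))) \<and>
        (\<forall>p. \<Phi> p - \<Phi>' p = nop H (\<tau> p) - \<tau> (nop L p)))"

end

theory Submission imports Defs begin

text \<open>An equivalence \<open>T : E \<rightarrow> E'\<close> carries a section \<open>s\<close> of \<open>E\<close> to the section \<open>T \<circ> s\<close> of \<open>E'\<close>
  inducing the very same cocycle, so it suffices to compare the cocycles of two sections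
  \<open>s\<^sub>1, s\<^sub>2\<close> of one extension. Their difference takes values in \<open>ker proj = H\<close>, i.e.
  \<open>s\<^sub>1 = s\<^sub>2 + \<tau>\<close>, and expanding the brackets and the Nijenhuis operator of \<open>s\<^sub>2 + \<tau>\<close> by
  bilinearity and skew-symmetry gives exactly the three equivalence identities for \<open>\<tau>\<close>.\<close>

lemma scaleC_diff_right: "c *\<^sub>C ((a::'a::cvector) - b) = c *\<^sub>C a - c *\<^sub>C b"
  by (metis scaleC_add_right diff_add_cancel add_diff_cancel)

lemma clin_imp_linear: "clin (f::'a::cvec \<Rightarrow> 'b::cvec) \<Longrightarrow> linear f"
  unfolding clin_def by (intro linearI) (auto simp: scaleR_scaleC)

lemma clin_comp: "clin f \<Longrightarrow> clin g \<Longrightarrow> clin (f \<circ> g)"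
  unfolding clin_def by simp

lemma clin_diff: "clin f \<Longrightarrow> clin g \<Longrightarrow> clin (\<lambda>x. f x - g x)"
  unfolding clin_def by (auto simp: scaleC_diff_right)

lemma clin_factor_through_inj:
  assumes "clin i" "inj i" "\<And>x. i (t x) = f x" "clin f"
  shows "clin t"
  using assms unfolding clin_def by (metis injD)

lemma map_poly_add_linear: "linear f \<Longrightarrow> map_poly f (p + q) = map_poly f p + map_poly f q"
  by (intro poly_eqI) (simp add: coeff_map_poly linear_0 linear_add)

lemma map_poly_diff_linear: "linear f \<Longrightarrow> map_poly f (p - q) = map_poly f p - map_poly f q"
  by (intro poly_eqI) (simp add: coeff_map_poly linear_0 linear_diff)

lemma map_poly_sum_linear: "linear f \<Longrightarrow> map_poly f (sum g A) = (\<Sum>x\<in>A. map_poly f (g x))"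
  by (intro poly_eqI) (simp add: coeff_map_poly linear_0 linear_sum coeff_sum)

lemma map_poly_fun_add_linear:
  "linear f \<Longrightarrow> linear g \<Longrightarrow> map_poly (\<lambda>x. f x + g x) p = map_poly f p + map_poly g p"
  by (intro poly_eqI) (simp add: coeff_map_poly linear_0)

lemma map_poly_inj_linear: "linear f \<Longrightarrow> inj f \<Longrightarrow> map_poly f p = map_poly f q \<Longrightarrow> p = q"
  by (intro poly_eqI) (metis coeff_map_poly linear_0 injD)

lemma funpow_intertwine: "(\<And>x. f (D x) = D' (f x)) \<Longrightarrow> f ((D ^^ n) x) = (D' ^^ n) (f x)"
  by (induct n) auto

lemma map_poly_subst_neg:
  fixes f :: "'a::real_vector \<Rightarrow> 'b::real_vector"
  assumes lin: "linear f" and inj: "inj f" and intertwine: "\<And>x. f (D x) = D' (f x)"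
  shows "map_poly f (subst_neg D p) = subst_neg D' (map_poly f p)"
proof -
  have "degree (map_poly f p) = degree p"
    by (rule degree_map_poly) (metis inj injD lin linear_0)
  then show ?thesis
    unfolding subst_neg_def
    by (simp add: map_poly_sum_linear[OF lin] map_poly_monom linear_0[OF lin] coeff_map_poly
        linear_scale[OF lin] funpow_intertwine[where f=f and D=D and D'=D', OF intertwine])
qed

lemma lie_conformal_brk_add_left:
  "lie_conformal A \<Longrightarrow> brk A (a + b) c = brk A a c + brk A b c"
  unfolding lie_conformal_def by meson

lemma lie_conformal_brk_add_right:
  "lie_conformal A \<Longrightarrow> brk A a (b + c) = brk A a b + brk A a c"
  unfolding lie_conformal_def by meson

lemma lie_conformal_brk_skew:
  "lie_conformal A \<Longrightarrow> brk A a b = - subst_neg (der A) (brk A b a)"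
  unfolding lie_conformal_def by meson

lemma nlca_morphism_clin: "nlca_morphism A f B \<Longrightarrow> clin f"
  unfolding nlca_morphism_def cd_linear_def by blast

lemma is_section_clin: "is_section L E proj s \<Longrightarrow> clin s"
  unfolding is_section_def cd_linear_def by blast

lemma is_section_comp:
  assumes "nlca_morphism E T E'" "\<And>x. proj' (T x) = proj x" "is_section L E proj s"
  shows "is_section L E' proj' (T \<circ> s)"
  using assms unfolding is_section_def cd_linear_def nlca_morphism_def by (simp add: clin_comp)

lemma induced_by_section_comp_morphism:
  assumes T: "nlca_morphism E T E'" and T_inc: "\<And>h. T (inc h) = inc' h"
    and induced: "induced_by_section L E inc s \<chi> \<rho> \<Phi>"
    and "clin inc" "clin s"
  shows "induced_by_section L E' inc' (T \<circ> s) \<chi> \<rho> \<Phi>"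
proof -
  have lin_T: "linear T" using T by (intro clin_imp_linear nlca_morphism_clin)
  have T_brk: "brk E' (T a) (T b) = map_poly T (brk E a b)" for a b
    using T unfolding nlca_morphism_def by blast
  have T_nop: "T (nop E a) = nop E' (T a)" for a
    using T unfolding nlca_morphism_def by blast
  have T_map_poly_s: "map_poly T (map_poly s X) = map_poly (T \<circ> s) X" for X
    using \<open>clin s\<close> by (simp add: map_poly_map_poly linear_0[OF lin_T] linear_0 clin_imp_linear)
  have map_poly_inc': "map_poly inc' X = map_poly T (map_poly inc X)" for X
    using \<open>clin inc\<close>
    by (simp add: map_poly_map_poly linear_0[OF lin_T] linear_0 clin_imp_linear comp_def T_inc)
  from induced show ?thesis
    unfolding induced_by_section_def
    by (simp add: map_poly_inc' T_map_poly_s[symmetric] T_brk T_nop T_inc[symmetric]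
        map_poly_diff_linear[OF lin_T] linear_diff[OF lin_T])
qed

lemma section_diff_factors_through_inc:
  assumes ext: "nonabelian_extension L H E inc proj"
    and s\<^sub>1: "is_section L E proj s\<^sub>1" and s\<^sub>2: "is_section L E proj s\<^sub>2"
  obtains \<tau> where "clin \<tau>" "\<And>p. s\<^sub>1 p = s\<^sub>2 p + inc (\<tau> p)"
proof -
  have "clin inc" "inj inc" and ker: "range inc = {x. proj x = 0}" and "clin proj"
    using ext unfolding nonabelian_extension_def by (auto intro: nlca_morphism_clin)
  have "proj (s\<^sub>1 p - s\<^sub>2 p) = 0" for p
    using s\<^sub>1 s\<^sub>2 \<open>clin proj\<close> unfolding is_section_def by (simp add: linear_diff clin_imp_linear)
  then have diff: "inc (inv inc (s\<^sub>1 p - s\<^sub>2 p)) = s\<^sub>1 p - s\<^sub>2 p" for p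
    using ker by (intro f_inv_into_f) auto
  have "clin (\<lambda>p. s\<^sub>1 p - s\<^sub>2 p)"
    using s\<^sub>1 s\<^sub>2 by (intro clin_diff is_section_clin)
  then have "clin (\<lambda>p. inv inc (s\<^sub>1 p - s\<^sub>2 p))"
    using \<open>clin inc\<close> \<open>inj inc\<close> diff by (rule clin_factor_through_inj[rotated 3])
  with diff show thesis
    by (intro that[of "\<lambda>p. inv inc (s\<^sub>1 p - s\<^sub>2 p)"]) (simp_all add: algebra_simps)
qed

lemma induced_rho_section_shift:
  assumes E: "lie_conformal E" and inc: "nlca_morphism H inc E" "inj inc"
    and induced\<^sub>1: "induced_by_section L E inc s\<^sub>1 \<chi>\<^sub>1 \<rho>\<^sub>1 \<Phi>\<^sub>1"
    and induced\<^sub>2: "induced_by_section L E inc s\<^sub>2 \<chi>\<^sub>2 \<rho>\<^sub>2 \<Phi>\<^sub>2"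
    and shift: "\<And>p. s\<^sub>1 p = s\<^sub>2 p + inc (\<tau> p)"
  shows "\<rho>\<^sub>1 p h - \<rho>\<^sub>2 p h = brk H (\<tau> p) h"
proof -
  have lin_inc: "linear inc" using inc by (intro clin_imp_linear nlca_morphism_clin)
  have inc_brk: "brk E (inc a) (inc b) = map_poly inc (brk H a b)" for a b
    using inc unfolding nlca_morphism_def by blast
  have "map_poly inc (\<rho>\<^sub>1 p h) = brk E (s\<^sub>2 p + inc (\<tau> p)) (inc h)"
    using induced\<^sub>1 shift unfolding induced_by_section_def by simp
  also have "\<dots> = map_poly inc (\<rho>\<^sub>2 p h + brk H (\<tau> p) h)"
    using induced\<^sub>2 unfolding induced_by_section_def
    by (simp add: lie_conformal_brk_add_left[OF E] inc_brk map_poly_add_linear[OF lin_inc])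
  finally have "\<rho>\<^sub>1 p h = \<rho>\<^sub>2 p h + brk H (\<tau> p) h"
    by (rule map_poly_inj_linear[OF lin_inc \<open>inj inc\<close>])
  then show ?thesis by simp
qed

lemma induced_chi_section_shift:
  assumes E: "lie_conformal E" and inc: "nlca_morphism H inc E" "inj inc"
    and induced\<^sub>1: "induced_by_section L E inc s\<^sub>1 \<chi>\<^sub>1 \<rho>\<^sub>1 \<Phi>\<^sub>1"
    and induced\<^sub>2: "induced_by_section L E inc s\<^sub>2 \<chi>\<^sub>2 \<rho>\<^sub>2 \<Phi>\<^sub>2"
    and shift: "\<And>p. s\<^sub>1 p = s\<^sub>2 p + inc (\<tau> p)" and "clin s\<^sub>2" "clin \<tau>"
  shows "\<chi>\<^sub>1 p q - \<chi>\<^sub>2 p q = brk H (\<tau> p) (\<tau> q) - map_poly \<tau> (brk L p q)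
           + \<rho>\<^sub>2 p (\<tau> q) - subst_neg (der H) (\<rho>\<^sub>2 q (\<tau> p))"
proof -
  have lin_inc: "linear inc" using inc by (intro clin_imp_linear nlca_morphism_clin)
  have lin_s\<^sub>2: "linear s\<^sub>2" and lin_\<tau>: "linear \<tau>"
    using \<open>clin s\<^sub>2\<close> \<open>clin \<tau>\<close> by (simp_all add: clin_imp_linear)
  have inc_brk: "brk E (inc a) (inc b) = map_poly inc (brk H a b)" for a b
    using inc unfolding nlca_morphism_def by blast
  have inc_der: "inc (der H a) = der E (inc a)" for a
    using inc unfolding nlca_morphism_def cd_linear_def by blast
  have \<rho>\<^sub>2: "brk E (s\<^sub>2 p) (inc h) = map_poly inc (\<rho>\<^sub>2 p h)" for p h
    using induced\<^sub>2 unfolding induced_by_section_def by simp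
  have \<chi>\<^sub>2: "brk E (s\<^sub>2 p) (s\<^sub>2 q) = map_poly inc (\<chi>\<^sub>2 p q) + map_poly s\<^sub>2 (brk L p q)" for p q
    using induced\<^sub>2 unfolding induced_by_section_def by (simp add: algebra_simps)
  have skew: "brk E (inc (\<tau> p)) (s\<^sub>2 q) = - map_poly inc (subst_neg (der H) (\<rho>\<^sub>2 q (\<tau> p)))"
    by (simp add: lie_conformal_brk_skew[OF E, of "inc (\<tau> p)"] \<rho>\<^sub>2
        map_poly_subst_neg[where D="der H" and D'="der E", OF lin_inc \<open>inj inc\<close> inc_der])
  have "s\<^sub>1 = (\<lambda>x. s\<^sub>2 x + (inc \<circ> \<tau>) x)" using shift by auto
  then have s\<^sub>1_map_poly: "map_poly s\<^sub>1 X = map_poly s\<^sub>2 X + map_poly inc (map_poly \<tau> X)" for X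
    by (simp only: map_poly_fun_add_linear[OF lin_s\<^sub>2 linear_compose[OF lin_\<tau> lin_inc]])
      (simp add: map_poly_map_poly linear_0[OF lin_\<tau>] linear_0[OF lin_inc])
  have "map_poly inc (\<chi>\<^sub>1 p q)
      = brk E (s\<^sub>2 p + inc (\<tau> p)) (s\<^sub>2 q + inc (\<tau> q)) - map_poly s\<^sub>1 (brk L p q)"
    using induced\<^sub>1 shift unfolding induced_by_section_def by simp
  also have "\<dots> = map_poly inc (\<chi>\<^sub>2 p q + (brk H (\<tau> p) (\<tau> q) - map_poly \<tau> (brk L p q)
                 + \<rho>\<^sub>2 p (\<tau> q) - subst_neg (der H) (\<rho>\<^sub>2 q (\<tau> p))))"
    by (simp add: lie_conformal_brk_add_left[OF E] lie_conformal_brk_add_right[OF E]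
        \<chi>\<^sub>2 \<rho>\<^sub>2 skew inc_brk s\<^sub>1_map_poly map_poly_add_linear[OF lin_inc]
        map_poly_diff_linear[OF lin_inc])
  finally have "\<chi>\<^sub>1 p q = \<chi>\<^sub>2 p q + (brk H (\<tau> p) (\<tau> q) - map_poly \<tau> (brk L p q)
                 + \<rho>\<^sub>2 p (\<tau> q) - subst_neg (der H) (\<rho>\<^sub>2 q (\<tau> p)))"
    by (rule map_poly_inj_linear[OF lin_inc \<open>inj inc\<close>])
  then show ?thesis by (simp add: algebra_simps)
qed

lemma induced_Phi_section_shift:
  assumes E: "nijenhuis E" and inc: "nlca_morphism H inc E" "inj inc"
    and induced\<^sub>1: "induced_by_section L E inc s\<^sub>1 \<chi>\<^sub>1 \<rho>\<^sub>1 \<Phi>\<^sub>1"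
    and induced\<^sub>2: "induced_by_section L E inc s\<^sub>2 \<chi>\<^sub>2 \<rho>\<^sub>2 \<Phi>\<^sub>2"
    and shift: "\<And>p. s\<^sub>1 p = s\<^sub>2 p + inc (\<tau> p)"
  shows "\<Phi>\<^sub>1 p - \<Phi>\<^sub>2 p = nop H (\<tau> p) - \<tau> (nop L p)"
proof -
  have lin_inc: "linear inc" using inc by (intro clin_imp_linear nlca_morphism_clin)
  have lin_nop: "linear (nop E)" using E unfolding nijenhuis_def by (simp add: clin_imp_linear)
  have inc_nop: "inc (nop H a) = nop E (inc a)" for a
    using inc unfolding nlca_morphism_def by blast
  have "inc (\<Phi>\<^sub>1 p) = nop E (s\<^sub>2 p + inc (\<tau> p)) - (s\<^sub>2 (nop L p) + inc (\<tau> (nop L p)))"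
    using induced\<^sub>1 shift unfolding induced_by_section_def by simp
  also have "\<dots> = inc (\<Phi>\<^sub>2 p + (nop H (\<tau> p) - \<tau> (nop L p)))"
    using induced\<^sub>2 unfolding induced_by_section_def
    by (simp add: linear_add[OF lin_nop] linear_add[OF lin_inc] linear_diff[OF lin_inc] inc_nop)
  finally show ?thesis using \<open>inj inc\<close> by (simp add: inj_eq algebra_simps)
qed

lemma induced_by_sections_equivalent_cocycles:
  assumes ext: "nonabelian_extension L H E inc proj"
    and "is_section L E proj s\<^sub>1" and s\<^sub>2: "is_section L E proj s\<^sub>2"
    and "induced_by_section L E inc s\<^sub>1 \<chi>\<^sub>1 \<rho>\<^sub>1 \<Phi>\<^sub>1"
    and "induced_by_section L E inc s\<^sub>2 \<chi>\<^sub>2 \<rho>\<^sub>2 \<Phi>\<^sub>2"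
  shows "equivalent_cocycles L H \<chi>\<^sub>1 \<rho>\<^sub>1 \<Phi>\<^sub>1 \<chi>\<^sub>2 \<rho>\<^sub>2 \<Phi>\<^sub>2"
proof -
  obtain \<tau> where "clin \<tau>" and shift: "\<And>p. s\<^sub>1 p = s\<^sub>2 p + inc (\<tau> p)"
    using section_diff_factors_through_inc assms(1-3) by blast
  have E: "lie_conformal E" "nijenhuis E" and inc: "nlca_morphism H inc E" "inj inc"
    using ext unfolding nonabelian_extension_def nijenhuis_lca_def by auto
  show ?thesis
    unfolding equivalent_cocycles_def
    using \<open>clin \<tau>\<close> is_section_clin[OF s\<^sub>2]
      induced_rho_section_shift[OF E(1) inc assms(4,5) shift]
      induced_chi_section_shift[OF E(1) inc assms(4,5) shift]
      induced_Phi_section_shift[OF E(2) inc assms(4,5) shift]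
    by blast
qed

theorem theorem5p7:
  fixes L :: "('l::cvec) nlca_str" and H :: "('h::cvec) nlca_str"
    and E :: "('e::cvec) nlca_str" and E' :: "('e'::cvec) nlca_str"
    and inc :: "'h \<Rightarrow> 'e" and proj :: "'e \<Rightarrow> 'l"
    and inc' :: "'h \<Rightarrow> 'e'" and proj' :: "'e' \<Rightarrow> 'l"
    and s :: "'l \<Rightarrow> 'e" and s' :: "'l \<Rightarrow> 'e'"
    and \<chi> :: "'l \<Rightarrow> 'l \<Rightarrow> 'h poly" and \<rho> :: "'l \<Rightarrow> 'h \<Rightarrow> 'h poly" and \<Phi> :: "'l \<Rightarrow> 'h"
    and \<chi>' :: "'l \<Rightarrow> 'l \<Rightarrow> 'h poly" and \<rho>' :: "'l \<Rightarrow> 'h \<Rightarrow> 'h poly" and \<Phi>' :: "'l \<Rightarrow> 'h"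
  assumes "nijenhuis_lca L" and "nijenhuis_lca H"
    and "nonabelian_extension L H E inc proj"
    and "nonabelian_extension L H E' inc' proj'"
    and "equivalent_extensions H E inc proj E' inc' proj'"
    and "is_section L E proj s" and "is_section L E' proj' s'"
    and "induced_by_section L E inc s \<chi> \<rho> \<Phi>"
    and "induced_by_section L E' inc' s' \<chi>' \<rho>' \<Phi>'"
  shows "equivalent_cocycles L H \<chi> \<rho> \<Phi> \<chi>' \<rho>' \<Phi>'"
proof -
  obtain T where T: "nlca_morphism E T E'" and T_inc: "\<And>h. T (inc h) = inc' h"
    and T_proj: "\<And>x. proj' (T x) = proj x"
    using assms(5) unfolding equivalent_extensions_def by blast
  have "clin inc" using assms(3) unfolding nonabelian_extension_def by (blast intro: nlca_morphism_clin)
  have section_Ts: "is_section L E' proj' (T \<circ> s)"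
    using is_section_comp[OF T T_proj assms(6)] .
  have "induced_by_section L E' inc' (T \<circ> s) \<chi> \<rho> \<Phi>"
    using induced_by_section_comp_morphism[OF T T_inc assms(8) \<open>clin inc\<close> is_section_clin[OF assms(6)]] .
  then show ?thesis
    using induced_by_sections_equivalent_cocycles[OF assms(4) section_Ts assms(7) _ assms(9)] by blast
qed

end
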